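(* Let $s,t,m$ be positive integers with $s\le t$, $s\mid m$, $m\ge t+2$, let $n=m^2$, and let $z=s(\lceil (t+2)/s\rceil-1)$. Let $v(0),\dots,v(m-1)$ be integers with $0\le v(j)\le t-1-(j\bmod s)$ for all $j$ and $v(j)=0$ for $m-z\le j\le m-1$. Then, for any initial configuration of distinct cell values $c_0,\dots,c_{n-1}$, the Block Algorithm (described in the context) terminates, and during its repeat-loop each of the cells $c_0,c_1,\dots,c_{m-3}$ is pushed exactly once.
   Context: Cells $c_0,\dots,c_{n-1}$ are real numbers (indices modulo $n$). For $0\le j\le n-1$ let $l(j)=s\lceil (j-t+1)/s\rceil \bmod n$ and $r(j)=(s\lfloor j/s\rfloor+t-1)\bmod n$. Pushing cell $j$ ("push-to-the-top") replaces $c_j$ by $\max\{c_{l(j)},c_{l(j)+1},\dots,c_{r(j)}\}+1$ (indices cyclic), leaving other cells unchanged. For $0\le j\le m-3$ define $l'(j)=l(j)$ if $0\le l(j)\le m-3$ and $l'(j)=0$ otherwise, and $r'(j)=r(j)$ if $0\le r(j)\le m-3$ and $r'(j)=m-3$ otherwise. Block Algorithm: (1) push cell $n-1$; (2) set $a_k\leftarrow 0$ for $k=0,\dots,m-3$ and $j\leftarrow 0$; (3) repeat: if $v(j)=\sum_{i=j+1}^{r'(j)}a_i$ and $a_j=0$, then push cell $j$, set $a_j\leftarrow 1$ and $j\leftarrow l'(j)$; otherwise set $j\leftarrow j+1$; until $j=m-2$; (4) push cell $m-2$. *)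

theory Defs
  imports Complex_Main
begin

text \<open>Cells are indexed by 0..n-1 (n = m^2); a configuration is c :: nat => real.\<close>

definition lfun :: "nat \<Rightarrow> nat \<Rightarrow> nat \<Rightarrow> nat \<Rightarrow> nat" where
  "lfun s t n j = nat ((int s * \<lceil>(real j - real t + 1) / real s\<rceil>) mod int n)"

definition rfun :: "nat \<Rightarrow> nat \<Rightarrow> nat \<Rightarrow> nat \<Rightarrow> nat" where
  "rfun s t n j = nat ((int s * \<lfloor>real j / real s\<rfloor> + int t - 1) mod int n)"

text \<open>Cyclic index range l, l+1, ..., r (mod n).\<close>
definition cyc_range :: "nat \<Rightarrow> nat \<Rightarrow> nat \<Rightarrow> nat set" where
  "cyc_range n l r = {(l + k) mod n | k. k \<le> (r + n - l) mod n}"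

definition push :: "nat \<Rightarrow> nat \<Rightarrow> nat \<Rightarrow> (nat \<Rightarrow> real) \<Rightarrow> nat \<Rightarrow> (nat \<Rightarrow> real)" where
  "push s t n c j = c(j := Max (c ` cyc_range n (lfun s t n j) (rfun s t n j)) + 1)"

definition lprime :: "nat \<Rightarrow> nat \<Rightarrow> nat \<Rightarrow> nat \<Rightarrow> nat" where
  "lprime s t m j = (if lfun s t (m^2) j \<le> m - 3 then lfun s t (m^2) j else 0)"

definition rprime :: "nat \<Rightarrow> nat \<Rightarrow> nat \<Rightarrow> nat \<Rightarrow> nat" where
  "rprime s t m j = (if rfun s t (m^2) j \<le> m - 3 then rfun s t (m^2) j else m - 3)"

definition block_cond :: "nat \<Rightarrow> nat \<Rightarrow> nat \<Rightarrow> (nat \<Rightarrow> int) \<Rightarrow> (nat \<Rightarrow> int) \<Rightarrow> nat \<Rightarrow> bool" where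
  "block_cond s t m v a j \<longleftrightarrow> v j = (\<Sum>i\<in>{j+1..rprime s t m j}. a i) \<and> a j = 0"

definition block_step :: "nat \<Rightarrow> nat \<Rightarrow> nat \<Rightarrow> (nat \<Rightarrow> int)
    \<Rightarrow> (nat \<Rightarrow> real) \<times> (nat \<Rightarrow> int) \<times> nat \<Rightarrow> (nat \<Rightarrow> real) \<times> (nat \<Rightarrow> int) \<times> nat" where
  "block_step s t m v st = (case st of (c, a, j) \<Rightarrow>
     (if block_cond s t m v a j
      then (push s t (m^2) c j, a(j := 1), lprime s t m j)
      else (c, a, j + 1)))"

text \<open>State after step (1), step (2), and k iterations of the loop body.\<close>
definition block_state :: "nat \<Rightarrow> nat \<Rightarrow> nat \<Rightarrow> (nat \<Rightarrow> int) \<Rightarrow> (nat \<Rightarrow> real) \<Rightarrow> nat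
    \<Rightarrow> (nat \<Rightarrow> real) \<times> (nat \<Rightarrow> int) \<times> nat" where
  "block_state s t m v c0 k =
     (block_step s t m v ^^ k) (push s t (m^2) c0 (m^2 - 1), (\<lambda>_. 0), 0)"

definition block_j :: "nat \<Rightarrow> nat \<Rightarrow> nat \<Rightarrow> (nat \<Rightarrow> int) \<Rightarrow> (nat \<Rightarrow> real) \<Rightarrow> nat \<Rightarrow> nat" where
  "block_j s t m v c0 k = snd (snd (block_state s t m v c0 k))"

definition block_pushes :: "nat \<Rightarrow> nat \<Rightarrow> nat \<Rightarrow> (nat \<Rightarrow> int) \<Rightarrow> (nat \<Rightarrow> real) \<Rightarrow> nat \<Rightarrow> nat \<Rightarrow> bool" where
  "block_pushes s t m v c0 k p \<longleftrightarrow>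
     (case block_state s t m v c0 k of (c, a, j) \<Rightarrow> j = p \<and> block_cond s t m v a j)"

end

theory Submission
  imports Defs
begin

text \<open>The bookkeeping vector a records which cells have been pushed. As long as the loop runs, every
unpushed cell i \<le> m - 3 has window sum at most v(i), and strictly less than v(i) if it lies below
the current position j; pushing j only raises the window sums of cells to the left of j, and the
loop restarts at l'(j) precisely so that the cells below the restart point, which are not
revisited, have windows ending before j. Counting
unpushed cells and the distance of j from m - 2 lexicographically shows that the loop terminates.
At exit, the right-most unpushed cell would see only pushed cells in its window, so its window sum
would reach t - 1 - (i mod s) \<ge> v(i), or v(i) = 0 when the window is cut off at m - 3: both
contradict the strict inequality. Hence every cell is pushed, and at most once since a push
requires a(j) = 0.\<close>

lemma lprime_le: "lprime s t m j \<le> m - 3"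
  by (simp add: lprime_def)

lemma rprime_le: "rprime s t m i \<le> m - 3" "rprime s t m i \<le> rfun s t (m^2) i"
  by (simp_all add: rprime_def)

definition block_a :: "nat \<Rightarrow> nat \<Rightarrow> nat \<Rightarrow> (nat \<Rightarrow> int) \<Rightarrow> (nat \<Rightarrow> real) \<Rightarrow> nat \<Rightarrow> nat \<Rightarrow> int" where
  "block_a s t m v c k = fst (snd (block_state s t m v c k))"

lemma block_a_0: "block_a s t m v c 0 = (\<lambda>_. 0)"
  and block_j_0: "block_j s t m v c 0 = 0"
  by (simp_all add: block_a_def block_j_def block_state_def)

lemma block_state_Suc:
  "block_state s t m v c (Suc k) = block_step s t m v (block_state s t m v c k)"
  by (simp add: block_state_def)

lemma block_a_Suc:
  "block_a s t m v c (Suc k) =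
    (if block_cond s t m v (block_a s t m v c k) (block_j s t m v c k)
     then (block_a s t m v c k)(block_j s t m v c k := 1) else block_a s t m v c k)"
  unfolding block_a_def block_j_def block_state_Suc
  by (cases "block_state s t m v c k") (simp add: block_step_def)

lemma block_j_Suc:
  "block_j s t m v c (Suc k) =
    (if block_cond s t m v (block_a s t m v c k) (block_j s t m v c k)
     then lprime s t m (block_j s t m v c k) else block_j s t m v c k + 1)"
  unfolding block_a_def block_j_def block_state_Suc
  by (cases "block_state s t m v c k") (simp add: block_step_def)

lemma block_pushes_iff:
  "block_pushes s t m v c k p \<longleftrightarrow>
    block_j s t m v c k = p \<and> block_cond s t m v (block_a s t m v c k) p"
  unfolding block_pushes_def block_a_def block_j_def
  by (cases "block_state s t m v c k") auto

lemma block_a_neq_0_iff: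
  "block_a s t m v c k p \<noteq> 0 \<longleftrightarrow> (\<exists>i<k. block_pushes s t m v c i p)"
proof (induction k)
  case 0
  then show ?case
    by (simp add: block_a_0)
next
  case (Suc k)
  then show ?case
    unfolding block_a_Suc block_pushes_iff by (auto simp: less_Suc_eq)
qed

lemma card_block_pushes_eq_1:
  assumes "block_a s t m v c K p \<noteq> 0"
  shows "card {i. i < K \<and> block_pushes s t m v c i p} = 1"
proof -
  obtain i0 where i0: "i0 < K" "block_pushes s t m v c i0 p"
    using assms block_a_neq_0_iff by blast
  have "\<not> block_pushes s t m v c i p" if "i0 < i" for i
    using block_a_neq_0_iff[of s t m v c i p] i0(2) that
    by (auto simp: block_pushes_iff block_cond_def)
  moreover have "\<not> block_pushes s t m v c i p" if "i < i0" for i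
    using block_a_neq_0_iff[of s t m v c i0 p] i0(2) that
    by (auto simp: block_pushes_iff block_cond_def)
  ultimately have "{i. i < K \<and> block_pushes s t m v c i p} = {i0}"
    using i0 by (auto intro: linorder_cases)
  then show ?thesis
    by simp
qed

locale block_params =
  fixes s t m :: nat
  assumes s_pos: "0 < s" and s_le_t: "s \<le> t" and t_le_m: "t + 2 \<le> m"
begin

lemma m_ge_3: "3 \<le> m"
  using s_pos s_le_t t_le_m by linarith

lemma three_m_le_m_square: "3 * m \<le> m^2"
  using m_ge_3 by (simp add: power2_eq_square)

lemma ceiling_divide_bounds:
  fixes x :: real
  shows "x \<le> of_int \<lceil>x / real s\<rceil> * real s" and "(of_int \<lceil>x / real s\<rceil> - 1) * real s < x"
  using ceiling_divide_upper[of "real s" x] ceiling_divide_lower[of "real s" x] s_pos by simp_all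

lemma rfun_eq:
  assumes "i \<le> m - 3"
  shows "rfun s t (m^2) i = i + (t - 1 - i mod s)"
proof -
  define r where "r = s * (i div s) + t - 1"
  have i_eq: "s * (i div s) + i mod s = i" and "i mod s < s"
    using s_pos by simp_all
  have "r < m^2"
    unfolding r_def using assms three_m_le_m_square s_le_t t_le_m i_eq by linarith
  have floor_eq: "\<lfloor>real i / real s\<rfloor> = int (i div s)"
    using floor_divide_of_nat_eq[of i s] by simp
  have "int s * int (i div s) + int t - 1 = int r"
    unfolding r_def using s_pos s_le_t by (simp add: of_nat_diff)
  then have "rfun s t (m^2) i = r"
    unfolding rfun_def floor_eq using \<open>r < m^2\<close> by (metis mod_less nat_int of_nat_mod)
  then show ?thesis
    unfolding r_def using i_eq \<open>i mod s < s\<close> s_le_t by linarith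
qed

lemma lprime_cases:
  assumes "j \<le> m - 3"
  shows "lprime s t m j = 0 \<or> int (lprime s t m j) = int s * \<lceil>(real j - real t + 1) / real s\<rceil>"
proof -
  define q where "q = \<lceil>(real j - real t + 1) / real s\<rceil>"
  have "real j - real t + 1 \<le> of_int q * real s"
    unfolding q_def by (rule ceiling_divide_bounds)
  then have "of_int (int j - int t + 1) \<le> (of_int (int s * q) :: real)"
    by (simp add: mult.commute)
  then have lower: "int j - int t + 1 \<le> int s * q"
    by (simp only: of_int_le_iff)
  have "(of_int q - 1) * real s < real j - real t + 1"
    unfolding q_def by (rule ceiling_divide_bounds)
  then have "of_int (int s * q) < (of_int (int j - int t + 1 + int s) :: real)"
    by (simp add: algebra_simps)
  then have upper: "int s * q < int j - int t + 1 + int s"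
    by (simp only: of_int_less_iff)
  have big: "3 * int m \<le> int (m^2)"
    using three_m_le_m_square by linarith
  show ?thesis
  proof (cases "0 \<le> int s * q")
    case True
    have "(int s * q) mod int (m^2) = int s * q"
      using True upper assms big s_pos s_le_t t_le_m by (intro mod_pos_pos_trivial) linarith+
    then show ?thesis
      using True unfolding lprime_def lfun_def q_def[symmetric] by auto
  next
    case False
    have "(int s * q + int (m^2)) mod int (m^2) = int s * q + int (m^2)"
      using False lower big t_le_m by (intro mod_pos_pos_trivial) linarith+
    then have "lfun s t (m^2) j = nat (int s * q + int (m^2))"
      unfolding lfun_def q_def[symmetric] by simp
    then have "m - 3 < lfun s t (m^2) j"
      using lower big t_le_m by linarith
    then show ?thesis
      unfolding lprime_def by simp
  qed
qed

lemma rfun_less_of_less_lprime: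
  assumes "j \<le> m - 3" and "i < lprime s t m j"
  shows "rfun s t (m^2) i < j"
proof -
  define q where "q = \<lceil>(real j - real t + 1) / real s\<rceil>"
  have "(of_int q - 1) * real s < real j - real t + 1"
    unfolding q_def by (rule ceiling_divide_bounds)
  then have "of_int (int s * (q - 1)) < (of_int (int j - int t + 1) :: real)"
    by (simp add: algebra_simps)
  then have upper: "int s * (q - 1) < int j - int t + 1"
    by (simp only: of_int_less_iff)
  have "int i < int s * q"
    using lprime_cases[OF assms(1)] assms(2) unfolding q_def by auto
  moreover have "int s * int (i div s) \<le> int i"
    by (simp flip: of_nat_mult)
  ultimately have "int s * int (i div s) < int s * q"
    by linarith
  then have "int (i div s) \<le> q - 1"
    using s_pos by (simp add: mult_less_cancel_left)
  then have "int s * int (i div s) \<le> int s * (q - 1)"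
    by (simp add: mult_left_mono)
  moreover have "i \<le> m - 3"
    using assms(2) lprime_le[of s t m j] by linarith
  then have "rfun s t (m^2) i = i + (t - 1 - i mod s)"
    by (rule rfun_eq)
  moreover have "int (s * (i div s)) = int s * int (i div s)" and "s * (i div s) + i mod s = i"
    and "i mod s < s"
    using s_pos by simp_all
  ultimately show ?thesis
    using upper s_le_t by linarith
qed

lemma tail_of_rfun_gt:
  assumes "s dvd m" and "i \<le> m - 3" and "m - 3 < rfun s t (m^2) i"
  shows "int m - int s * (\<lceil>real (t + 2) / real s\<rceil> - 1) \<le> int i"
proof -
  define Q where "Q = \<lceil>real (t + 2) / real s\<rceil>"
  have "real (t + 2) \<le> of_int Q * real s"
    unfolding Q_def by (rule ceiling_divide_bounds)
  then have "of_int (int t + 2) \<le> (of_int (int s * Q) :: real)"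
    by (simp add: mult.commute)
  then have t_Q: "int t + 2 \<le> int s * Q"
    by (simp only: of_int_le_iff)
  obtain M where M: "m = s * M"
    using assms(1) by blast
  have "rfun s t (m^2) i = i + (t - 1 - i mod s)"
    using assms(2) by (rule rfun_eq)
  moreover have "s * (i div s) + i mod s = i" and "i mod s < s"
    using s_pos by simp_all
  ultimately have "m < s * (i div s) + t + 2"
    using assms(3) s_le_t by linarith
  then have "int s * int M < int s * int (i div s) + int t + 2"
    unfolding M by (simp flip: of_nat_mult)
  then have "int s * (int M - Q) < int s * int (i div s)"
    using t_Q by (simp add: algebra_simps)
  then have "int M - Q + 1 \<le> int (i div s)"
    using s_pos by (simp add: mult_less_cancel_left)
  then have "int s * (int M - Q + 1) \<le> int s * int (i div s)"
    by (simp add: mult_left_mono)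
  moreover have "int s * int (i div s) \<le> int i"
    by (simp flip: of_nat_mult)
  ultimately show ?thesis
    unfolding Q_def[symmetric] M by (simp add: algebra_simps)
qed

definition window_sum :: "(nat \<Rightarrow> int) \<Rightarrow> nat \<Rightarrow> int" where
  "window_sum a i = (\<Sum>x = i + 1..rprime s t m i. a x)"

lemma block_cond_iff: "block_cond s t m v a j \<longleftrightarrow> v j = window_sum a j \<and> a j = 0"
  by (simp add: block_cond_def window_sum_def)

lemma window_sum_fun_upd:
  assumes "a j = 0"
  shows "window_sum (a(j := 1)) i = window_sum a i + (if j \<in> {i + 1..rprime s t m i} then 1 else 0)"
proof -
  have "(a(j := 1)) x = a x + (if x = j then 1 else 0)" for x
    using assms by simp
  then show ?thesis
    unfolding window_sum_def by (simp add: sum.distrib sum.delta)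
qed

definition loop_inv :: "(nat \<Rightarrow> int) \<Rightarrow> (nat \<Rightarrow> int) \<Rightarrow> nat \<Rightarrow> bool" where
  "loop_inv v a j \<longleftrightarrow> j \<le> m - 2 \<and> (\<forall>i. a i = 0 \<or> a i = 1) \<and>
     (\<forall>i \<le> m - 3. a i = 0 \<longrightarrow> window_sum a i \<le> v i) \<and>
     (\<forall>i < j. a i = 0 \<longrightarrow> window_sum a i < v i)"

lemma loop_inv_running: "loop_inv v a j \<Longrightarrow> j \<noteq> m - 2 \<Longrightarrow> j \<le> m - 3"
  unfolding loop_inv_def by linarith

lemma loop_inv_init:
  assumes "\<forall>i \<le> m - 3. 0 \<le> v i"
  shows "loop_inv v (\<lambda>_. 0) 0"
  using assms by (simp add: loop_inv_def window_sum_def)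

lemma loop_inv_skip:
  assumes inv: "loop_inv v a j" and "j \<le> m - 3" and "\<not> block_cond s t m v a j"
  shows "loop_inv v a (j + 1)"
proof -
  have "window_sum a j < v j" if "a j = 0"
    using assms that unfolding loop_inv_def block_cond_iff by force
  then show ?thesis
    using inv \<open>j \<le> m - 3\<close> m_ge_3 unfolding loop_inv_def by (auto simp: less_Suc_eq)
qed

lemma loop_inv_push:
  assumes inv: "loop_inv v a j" and "j \<le> m - 3" and cond: "block_cond s t m v a j"
  shows "loop_inv v (a(j := 1)) (lprime s t m j)"
proof -
  have "a j = 0"
    using cond by (simp add: block_cond_iff)
  note sum_upd = window_sum_fun_upd[of a j, OF this]
  have le: "window_sum (a(j := 1)) i \<le> v i" if "i \<le> m - 3" "i \<noteq> j" "a i = 0" for i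
  proof (cases "i < j")
    case True
    then show ?thesis
      using inv that unfolding loop_inv_def sum_upd by force
  next
    case False
    then have "j \<notin> {i + 1..rprime s t m i}"
      using that by auto
    then show ?thesis
      using inv that unfolding loop_inv_def sum_upd by auto
  qed
  have less: "window_sum (a(j := 1)) i < v i" if "i < lprime s t m j" "a i = 0" for i
  proof -
    have "rfun s t (m^2) i < j"
      using rfun_less_of_less_lprime \<open>j \<le> m - 3\<close> that(1) by blast
    moreover have "i \<le> rfun s t (m^2) i"
      using rfun_eq[of i] that(1) lprime_le[of s t m j] by simp
    ultimately have "i < j" and "j \<notin> {i + 1..rprime s t m i}"
      using rprime_le(2)[of s t m i] by auto
    then show ?thesis
      using inv that(2) unfolding loop_inv_def sum_upd by auto
  qed
  show ?thesis
    unfolding loop_inv_def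
  proof (intro conjI allI impI)
    show "lprime s t m j \<le> m - 2"
      using lprime_le[of s t m j] by simp
  next
    fix i
    show "(a(j := 1)) i = 0 \<or> (a(j := 1)) i = 1"
      using inv by (simp add: loop_inv_def)
  next
    fix i
    assume "i \<le> m - 3" "(a(j := 1)) i = 0"
    then show "window_sum (a(j := 1)) i \<le> v i"
      using le by (auto split: if_splits)
  next
    fix i
    assume "i < lprime s t m j" "(a(j := 1)) i = 0"
    then show "window_sum (a(j := 1)) i < v i"
      using less by (auto split: if_splits)
  qed
qed

lemma loop_inv_exit:
  assumes "s dvd m"
    and v_le: "\<forall>j<m. v j \<le> int t - 1 - int (j mod s)"
    and v_tail: "\<forall>j<m. int m - int s * (\<lceil>real (t + 2) / real s\<rceil> - 1) \<le> int j \<longrightarrow> v j = 0"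
    and inv: "loop_inv v a (m - 2)" and "p \<le> m - 3"
  shows "a p \<noteq> 0"
proof
  assume "a p = 0"
  define Z where "Z = {i. i \<le> m - 3 \<and> a i = 0}"
  define i where "i = Max Z"
  have "finite Z" and "p \<in> Z"
    unfolding Z_def using \<open>a p = 0\<close> \<open>p \<le> m - 3\<close> by auto
  then have "i \<in> Z" and i_max: "\<And>x. x \<in> Z \<Longrightarrow> x \<le> i"
    unfolding i_def using Max_in by auto
  then have i: "i \<le> m - 3" "i < m" "a i = 0"
    unfolding Z_def using m_ge_3 by auto
  have "a x = 1" if "x \<in> {i + 1..rprime s t m i}" for x
  proof -
    have "x \<le> m - 3" and "x \<notin> Z"
      using that rprime_le(1)[of s t m i] i_max by fastforce+
    then show ?thesis
      using inv unfolding loop_inv_def Z_def by auto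
  qed
  then have "window_sum a i = int (rprime s t m i - i)"
    unfolding window_sum_def by simp
  moreover have "window_sum a i < v i"
    using inv i m_ge_3 unfolding loop_inv_def by auto
  moreover have "rfun s t (m^2) i = i + (t - 1 - i mod s)" and "i mod s < s"
    using rfun_eq[OF i(1)] s_pos by simp_all
  ultimately show False
    using v_le v_tail tail_of_rfun_gt[OF \<open>s dvd m\<close> i(1)] i(2) s_le_t
    unfolding rprime_def by (auto split: if_splits)
qed

text \<open>Since m - 2 - j < m - 1, this orders states lexicographically by the number of unpushed
cells and then by j.\<close>
definition loop_measure :: "(nat \<Rightarrow> int) \<Rightarrow> nat \<Rightarrow> nat" where
  "loop_measure a j = (m - 1) * card {i. i \<le> m - 3 \<and> a i = 0} + (m - 2 - j)"

lemma loop_measure_skip: "j \<le> m - 3 \<Longrightarrow> loop_measure a (j + 1) < loop_measure a j"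
  using m_ge_3 by (simp add: loop_measure_def)

lemma loop_measure_push:
  assumes "j \<le> m - 3" and "a j = 0"
  shows "loop_measure (a(j := 1)) j' < loop_measure a j"
proof -
  define Z where "Z = {i. i \<le> m - 3 \<and> a i = 0}"
  have "{i. i \<le> m - 3 \<and> (a(j := 1)) i = 0} = Z - {j}"
    unfolding Z_def by auto
  moreover have "finite Z" and "j \<in> Z"
    unfolding Z_def using assms by auto
  ultimately have "card Z = Suc (card {i. i \<le> m - 3 \<and> (a(j := 1)) i = 0})"
    by (metis card_Suc_Diff1)
  then show ?thesis
    unfolding loop_measure_def Z_def[symmetric] using m_ge_3 by simp
qed

lemma block_loop_inv:
  assumes "\<forall>i \<le> m - 3. 0 \<le> v i" and "\<forall>i<k. block_j s t m v c i \<noteq> m - 2"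
  shows "loop_inv v (block_a s t m v c k) (block_j s t m v c k)"
  using assms(2)
proof (induction k)
  case 0
  then show ?case
    using loop_inv_init[OF assms(1)] by (simp add: block_a_0 block_j_0)
next
  case (Suc k)
  then have inv: "loop_inv v (block_a s t m v c k) (block_j s t m v c k)"
    by simp
  moreover have "block_j s t m v c k \<le> m - 3"
    using loop_inv_running[OF inv] Suc.prems by simp
  ultimately show ?case
    using loop_inv_push loop_inv_skip by (simp only: block_a_Suc block_j_Suc split: if_split) simp
qed

lemma block_loop_terminates:
  assumes "\<forall>i \<le> m - 3. 0 \<le> v i"
  shows "\<exists>k. block_j s t m v c k = m - 2"
proof (rule ccontr)
  assume "\<nexists>k. block_j s t m v c k = m - 2"
  then have running: "\<forall>i<k. block_j s t m v c i \<noteq> m - 2" for k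
    by blast
  have "loop_measure (block_a s t m v c k) (block_j s t m v c k) + k
      \<le> loop_measure (block_a s t m v c 0) (block_j s t m v c 0)" for k
  proof (induction k)
    case 0
    then show ?case
      by simp
  next
    case (Suc k)
    have "block_j s t m v c k \<le> m - 3"
      using loop_inv_running[OF block_loop_inv[OF assms running]] running by blast
    then have "loop_measure (block_a s t m v c (Suc k)) (block_j s t m v c (Suc k))
        < loop_measure (block_a s t m v c k) (block_j s t m v c k)"
      unfolding block_a_Suc block_j_Suc
      using loop_measure_push loop_measure_skip by (simp add: block_cond_iff)
    then show ?case
      using Suc.IH by simp
  qed
  from this[of "Suc (loop_measure (block_a s t m v c 0) (block_j s t m v c 0))"] show False
    by simp
qed

end

theorem lemma8:
  fixes s t m :: nat and v :: "nat \<Rightarrow> int" and c :: "nat \<Rightarrow> real"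
  assumes "0 < s" and "s \<le> t" and "s dvd m" and "m \<ge> t + 2"
    and "\<forall>j<m. 0 \<le> v j \<and> v j \<le> int t - 1 - int (j mod s)"
    and "\<forall>j<m. int m - int s * (\<lceil>real (t + 2) / real s\<rceil> - 1) \<le> int j \<longrightarrow> v j = 0"
    and "inj_on c {0..<m^2}"
  shows "\<exists>K. block_j s t m v c K = m - 2 \<and> (\<forall>i<K. block_j s t m v c i \<noteq> m - 2) \<and>
           (\<forall>p\<in>{0..m-3}. card {i. i < K \<and> block_pushes s t m v c i p} = 1)"
proof -
  \<comment> \<open>The cell values never influence the control flow, so injectivity of c is not needed.\<close>
  interpret block_params s t m
    using assms(1,2,4) by unfold_locales simp_all
  have v_nonneg: "\<forall>i \<le> m - 3. 0 \<le> v i"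
    using assms(5) m_ge_3 by auto
  define K where "K = (LEAST k. block_j s t m v c k = m - 2)"
  have exit: "block_j s t m v c K = m - 2"
    unfolding K_def using block_loop_terminates[OF v_nonneg] by (rule LeastI_ex)
  have running: "\<forall>i<K. block_j s t m v c i \<noteq> m - 2"
    unfolding K_def using not_less_Least by blast
  have "loop_inv v (block_a s t m v c K) (m - 2)"
    using block_loop_inv[OF v_nonneg running] exit by simp
  moreover have "\<forall>j<m. v j \<le> int t - 1 - int (j mod s)"
    using assms(5) by simp
  ultimately have "\<forall>p\<in>{0..m-3}. block_a s t m v c K p \<noteq> 0"
    using loop_inv_exit[OF assms(3) _ assms(6)] by simp
  then show ?thesis
    using exit running card_block_pushes_eq_1 by blast
qed

end
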